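(* Let $M>0$, $\tau>0$, $p'=\lfloor p/2\rfloor$, and for $\theta=(\theta_1,\dots,\theta_{p'})\in\{0,1\}^{p'}$ define $\Sigma(\theta)$ by $$\Sigma(\theta)^{-1}=M^{-1}I_p+\sum_{m=1}^{p'}\theta_m\frac{\tau}{\sqrt n}e_me_m^T.$$ If $\tau/\sqrt n\le M/3$ and $\tau/M\le1/3$, then there exists a positive constant $C$ such that $$\min_{H(\theta,\theta')\ge1}\frac{\|w_{GMV}(\Sigma(\theta'))-w_{GMV}(\Sigma(\theta))\|^2}{H(\theta,\theta')}\cdot\frac{p'}{2}\cdot\min_{H(\theta,\theta')=1}\|\mathbb{P}_\theta\wedge\mathbb{P}_{\theta'}\|\ \ge\ \frac{C}{np}$$ for all sufficiently large $n$.
   Context: $e_m$ is the $m$-th standard basis vector of $\mathbb{R}^p$. $H(\theta,\theta')=\sum_m|\theta_m-\theta'_m|$ is the Hamming distance. $\mathbb{P}_\theta$ is the joint law of $X_1,\dots,X_n$ i.i.d. $N_p(0,\Sigma(\theta))$. For probability measures $P,Q$ with densities $p,q$ w.r.t. a common dominating measure, $\|P\wedge Q\|=\int\min(p,q)$. For $\Sigma\in\mathcal{C}_p$ (symmetric positive definite), $w_{GMV}(\Sigma)=\Sigma^{-1}\mathbf{1}/(\mathbf{1}^T\Sigma^{-1}\mathbf{1})$, the minimizer of $w^T\Sigma w$ subject to $w^T\mathbf{1}=1$; $\|\cdot\|$ is the Euclidean norm. Here $p=p_n\to\infty$. *)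

theory Defs
  imports "HOL-Analysis.Analysis" "Jordan_Normal_Form.Determinant"
begin

definition minv :: "real mat \<Rightarrow> real mat" where
  "minv A = (SOME B. B \<in> carrier_mat (dim_row A) (dim_row A) \<and>
                     A * B = 1\<^sub>m (dim_row A) \<and> B * A = 1\<^sub>m (dim_row A))"

definition enorm :: "real vec \<Rightarrow> real" where
  "enorm v = sqrt (v \<bullet> v)"

definition w_GMV :: "real mat \<Rightarrow> real vec" where
  "w_GMV S = (let p = dim_row S; one = vec p (\<lambda>_. 1) in
      (1 / (one \<bullet> (minv S *\<^sub>v one))) \<cdot>\<^sub>v (minv S *\<^sub>v one))"

text \<open>Density (w.r.t. Lebesgue measure on R^p, vectors as functions on {..<p})
  of N_p(0,Sigma).\<close>
definition mvn_density :: "real mat \<Rightarrow> (nat \<Rightarrow> real) \<Rightarrow> real" where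
  "mvn_density S x = (let p = dim_row S; Si = minv S in
      (2 * pi) powr (- real p / 2) * det S powr (- 1 / 2) *
      exp (- (1/2) * (\<Sum>i<p. \<Sum>j<p. x i * Si $$ (i,j) * x j)))"

definition sample_space :: "nat \<Rightarrow> nat \<Rightarrow> (nat \<Rightarrow> nat \<Rightarrow> real) measure" where
  "sample_space n p = PiM {..<n} (\<lambda>_. PiM {..<p} (\<lambda>_. lborel))"

definition joint_density :: "nat \<Rightarrow> real mat \<Rightarrow> (nat \<Rightarrow> nat \<Rightarrow> real) \<Rightarrow> real" where
  "joint_density n S X = (\<Prod>i<n. mvn_density S (X i))"

definition joint_law :: "nat \<Rightarrow> real mat \<Rightarrow> (nat \<Rightarrow> nat \<Rightarrow> real) measure" where
  "joint_law n S = density (sample_space n (dim_row S)) (\<lambda>X. ennreal (joint_density n S X))"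

definition affinity :: "'a measure \<Rightarrow> ('a \<Rightarrow> real) \<Rightarrow> ('a \<Rightarrow> real) \<Rightarrow> real" where
  "affinity \<nu> f g = (\<integral>x. min (f x) (g x) \<partial>\<nu>)"

text \<open>{0,1}^{p'}, represented as functions nat => real vanishing from index p' on.\<close>
definition Theta :: "nat \<Rightarrow> (nat \<Rightarrow> real) set" where
  "Theta q = {\<theta>. (\<forall>m<q. \<theta> m \<in> {0,1}) \<and> (\<forall>m\<ge>q. \<theta> m = 0)}"

definition hamming :: "nat \<Rightarrow> (nat \<Rightarrow> real) \<Rightarrow> (nat \<Rightarrow> real) \<Rightarrow> real" where
  "hamming q \<theta> \<theta>' = (\<Sum>m<q. \<bar>\<theta> m - \<theta>' m\<bar>)"

definition Sigma_inv :: "real \<Rightarrow> real \<Rightarrow> nat \<Rightarrow> nat \<Rightarrow> (nat \<Rightarrow> real) \<Rightarrow> real mat" where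
  "Sigma_inv M \<tau> n p \<theta> = (1 / M) \<cdot>\<^sub>m 1\<^sub>m p +
     mat p p (\<lambda>(i,j). \<Sum>m<p div 2. \<theta> m * (\<tau> / sqrt (real n)) *
                         (unit_vec p m $ i) * (unit_vec p m $ j))"

definition Sigma :: "real \<Rightarrow> real \<Rightarrow> nat \<Rightarrow> nat \<Rightarrow> (nat \<Rightarrow> real) \<Rightarrow> real mat" where
  "Sigma M \<tau> n p \<theta> = minv (Sigma_inv M \<tau> n p \<theta>)"

definition lhs_quantity :: "real \<Rightarrow> real \<Rightarrow> nat \<Rightarrow> nat \<Rightarrow> real" where
  "lhs_quantity M \<tau> n p = (let q = p div 2; S = Sigma M \<tau> n p in
     Min {(enorm (w_GMV (S \<theta>') - w_GMV (S \<theta>)))\<^sup>2 / hamming q \<theta> \<theta>' | \<theta> \<theta>'.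
            \<theta> \<in> Theta q \<and> \<theta>' \<in> Theta q \<and> hamming q \<theta> \<theta>' \<ge> 1}
     * (real q / 2)
     * Min {affinity (sample_space n p) (joint_density n (S \<theta>)) (joint_density n (S \<theta>')) | \<theta> \<theta>'.
            \<theta> \<in> Theta q \<and> \<theta>' \<in> Theta q \<and> hamming q \<theta> \<theta>' = 1})"

end

theory Submission
  imports Defs "HOL-Probability.Distributions" "HOL-Real_Asymp.Real_Asymp"
begin

text \<open>Both \<open>\<Sigma>(\<theta>)\<inverse>\<close> and \<open>\<Sigma>(\<theta>)\<close> are diagonal, so \<open>w\<^sub>G\<^sub>M\<^sub>V(\<Sigma>(\<theta>))\<close> is the vector of
  precisions normalised to sum 1, and \<open>P\<^sub>\<theta>\<close> is a product of one-dimensional centred normals.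
  Each flipped coordinate changes one precision by \<open>\<tau>/\<surd>n\<close>; since the last \<open>p - p'\<close>
  precisions never change, normalisation cannot absorb this, and every flip moves the weights by
  at least \<open>c \<tau>\<^sup>2M\<^sup>2/(n p\<^sup>2)\<close> in squared norm. For the affinity, Le Cam's inequality
  \<open>\<parallel>P \<and> Q\<parallel> \<ge> (\<integral>\<surd>(pq))\<^sup>2/2\<close> reduces to the Bhattacharyya coefficient of two normals,
  which for a single flip is \<open>(1 - O(\<tau>\<^sup>2M\<^sup>2/n))^(n/2)\<close> and hence bounded below. As
  \<open>p' \<ge> p/4\<close>, the product is at least a constant times \<open>1/(n p)\<close>.\<close>

lemma minv_eqI:
  assumes "B \<in> carrier_mat n n" "A \<in> carrier_mat n n" "A * B = 1\<^sub>m n" "B * A = 1\<^sub>m n"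
  shows "minv A = B"
proof -
  have "\<exists>B. B \<in> carrier_mat n n \<and> A * B = 1\<^sub>m n \<and> B * A = 1\<^sub>m n"
    using assms by auto
  from someI_ex[OF this] have C: "minv A \<in> carrier_mat n n" "minv A * A = 1\<^sub>m n"
    using assms(2) unfolding minv_def by auto
  have "minv A = minv A * (A * B)" using C(1) assms(3) by (simp add: right_mult_one_mat)
  also have "\<dots> = (minv A * A) * B" using C(1) assms(2,1) by (rule assoc_mult_mat[symmetric])
  finally show ?thesis using C(2) assms(1) by (simp add: left_mult_one_mat)
qed

lemma minv_mat_diag:
  assumes "\<And>i. i < n \<Longrightarrow> f i \<noteq> 0"
  shows "minv (mat_diag n f) = mat_diag n (\<lambda>i. 1 / f i)"
proof (rule minv_eqI)
  have "mat_diag n (\<lambda>i. f i * (1 / f i)) = 1\<^sub>m n" "mat_diag n (\<lambda>i. 1 / f i * f i) = 1\<^sub>m n"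
    using assms by (auto intro!: eq_matI simp: mat_diag_def)
  then show "mat_diag n f * mat_diag n (\<lambda>i. 1 / f i) = 1\<^sub>m n"
    "mat_diag n (\<lambda>i. 1 / f i) * mat_diag n f = 1\<^sub>m n" by simp_all
qed auto

lemma det_mat_diag: "det (mat_diag n f) = (\<Prod>i<n. f i)"
  by (subst det_upper_triangular[of _ n])
     (auto simp: mat_diag_def upper_triangular_def prod_list_diag_prod atLeast0LessThan)

lemma mat_diag_mult_vec: "mat_diag n f *\<^sub>v vec n g = vec n (\<lambda>i. f i * g i)"
  by (rule eq_vecI)
     (auto simp: mat_diag_def scalar_prod_def row_def sum.remove[of "{0..<n}"] intro!: sum.neutral)

lemma sum_mat_diag_quadratic_form:
  fixes x f :: "nat \<Rightarrow> 'a :: comm_semiring_1"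
  shows "(\<Sum>i<n. \<Sum>j<n. x i * mat_diag n f $$ (i, j) * x j) = (\<Sum>i<n. f i * (x i)\<^sup>2)"
proof (rule sum.cong)
  fix i assume "i \<in> {..<n}"
  then have "(\<Sum>j<n. x i * mat_diag n f $$ (i, j) * x j) = (\<Sum>j<n. if j = i then f i * (x i)\<^sup>2 else 0)"
    by (intro sum.cong) (auto simp: mat_diag_def power2_eq_square ac_simps)
  with \<open>i \<in> {..<n}\<close> show "(\<Sum>j<n. x i * mat_diag n f $$ (i, j) * x j) = f i * (x i)\<^sup>2"
    by simp
qed simp

lemma enorm_vec_diff_sq: "(enorm (vec p f - vec p g))\<^sup>2 = (\<Sum>i<p. (f i - g i)\<^sup>2)"
proof -
  have "(vec p f - vec p g) \<bullet> (vec p f - vec p g) = (\<Sum>i<p. (f i - g i)\<^sup>2)"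
    by (simp add: scalar_prod_def atLeast0LessThan power2_eq_square)
  then show ?thesis by (simp add: enorm_def sum_nonneg)
qed

definition normal_prec_density :: "real \<Rightarrow> real \<Rightarrow> real" where
  "normal_prec_density d x = sqrt d / sqrt (2 * pi) * exp (- (d * x\<^sup>2) / 2)"

lemma normal_prec_density_eq_normal_density:
  "d > 0 \<Longrightarrow> normal_prec_density d = normal_density 0 (1 / sqrt d)"
  by (auto simp: normal_prec_density_def normal_density_def real_sqrt_divide real_sqrt_mult
      power_divide divide_simps)

lemma normal_prec_density_nonneg: "d > 0 \<Longrightarrow> normal_prec_density d x \<ge> 0"
  by (simp add: normal_prec_density_def)

lemma integrable_normal_prec_density: "d > 0 \<Longrightarrow> integrable lborel (normal_prec_density d)"
  by (simp add: normal_prec_density_eq_normal_density)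

lemma integral_normal_prec_density: "d > 0 \<Longrightarrow> integral\<^sup>L lborel (normal_prec_density d) = 1"
  by (simp add: normal_prec_density_eq_normal_density)

lemma normal_prec_density_powr:
  "d > 0 \<Longrightarrow> (2 * pi) powr (- 1 / 2) * (1 / d) powr (- 1 / 2) * exp (- (1 / 2) * (d * x\<^sup>2))
     = normal_prec_density d x"
  by (simp add: normal_prec_density_def powr_minus powr_half_sqrt[symmetric] powr_divide divide_simps)

lemma real_sqrt_prod: "sqrt (\<Prod>i\<in>A. f i) = (\<Prod>i\<in>A. sqrt (f i))"
  by (induction A rule: infinite_finite_induct) (auto simp: real_sqrt_mult)

definition bhattacharyya :: "real \<Rightarrow> real \<Rightarrow> real" where
  "bhattacharyya d e = sqrt (2 * sqrt (d * e) / (d + e))"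

lemma bhattacharyya_same: "d > 0 \<Longrightarrow> bhattacharyya d d = 1"
  by (simp add: bhattacharyya_def)

lemma bhattacharyya_commute: "bhattacharyya d e = bhattacharyya e d"
  by (simp add: bhattacharyya_def ac_simps)

lemma sqrt_normal_prec_density_mult:
  assumes "d > 0" "e > 0"
  shows "sqrt (normal_prec_density d x * normal_prec_density e x)
    = bhattacharyya d e * normal_prec_density ((d + e) / 2) x"
proof -
  have "exp (- (d * x\<^sup>2) / 2) * exp (- (e * x\<^sup>2) / 2) = (exp (- ((d + e) / 2 * x\<^sup>2) / 2))\<^sup>2"
    by (simp add: exp_add[symmetric] power2_eq_square algebra_simps)
  then have "sqrt (normal_prec_density d x * normal_prec_density e x)
      = sqrt (sqrt d * sqrt e) / sqrt (2 * pi) * exp (- ((d + e) / 2 * x\<^sup>2) / 2)"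
    using assms by (simp add: normal_prec_density_def real_sqrt_mult real_sqrt_divide field_simps)
  moreover have "2 * sqrt (d * e) / (d + e) * ((d + e) / 2) = sqrt d * sqrt e"
    using assms by (simp add: real_sqrt_mult field_simps)
  then have "bhattacharyya d e * sqrt ((d + e) / 2) = sqrt (sqrt d * sqrt e)"
    unfolding bhattacharyya_def real_sqrt_mult[symmetric] by simp
  ultimately show ?thesis
    unfolding normal_prec_density_def by (simp add: field_simps)
qed

lemma sqrt_mult_le_min_add:
  fixes a b t :: real
  assumes "a \<ge> 0" "b \<ge> 0" "t > 0"
  shows "sqrt (a * b) \<le> (t * min a b + (a + b) / t) / 2"
proof -
  have "sqrt (a * b) = sqrt ((t * min a b) * (max a b / t))"
    using assms by (simp add: min_def max_def ac_simps)
  also have "\<dots> \<le> (t * min a b + max a b / t) / 2"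
    using assms by (intro arith_geo_mean_sqrt) auto
  also have "\<dots> \<le> (t * min a b + (a + b) / t) / 2"
    using assms by (auto simp: max_def intro!: divide_right_mono)
  finally show ?thesis .
qed

lemma affinity_ge_half_sq_integral_sqrt:
  fixes f g :: "'a \<Rightarrow> real"
  assumes f: "integrable N f" "integral\<^sup>L N f = 1" and g: "integrable N g" "integral\<^sup>L N g = 1"
    and fg: "integrable N (\<lambda>x. sqrt (f x * g x))"
    and nonneg: "\<And>x. x \<in> space N \<Longrightarrow> f x \<ge> 0 \<and> g x \<ge> 0"
  shows "affinity N f g \<ge> (\<integral>x. sqrt (f x * g x) \<partial>N)\<^sup>2 / 2"
proof -
  define B where "B = (\<integral>x. sqrt (f x * g x) \<partial>N)"
  define A where "A = affinity N f g"
  have A_nonneg: "A \<ge> 0"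
    unfolding A_def affinity_def using nonneg by (intro integral_nonneg_AE) auto
  show ?thesis
  proof (cases "B > 0")
    case True
    define t where "t = 2 / B"
    have t: "t > 0" using True by (simp add: t_def)
    have "B \<le> (\<integral>x. (t * min (f x) (g x) + (f x + g x) / t) / 2 \<partial>N)"
      unfolding B_def using f g fg
    proof (intro integral_mono)
      fix x assume "x \<in> space N"
      then show "sqrt (f x * g x) \<le> (t * min (f x) (g x) + (f x + g x) / t) / 2"
        using nonneg t by (intro sqrt_mult_le_min_add) auto
    qed auto
    also have "\<dots> = (t * A + 2 / t) / 2"
      using f g by (simp add: A_def affinity_def)
    finally have "B \<le> t * A" by (simp add: t_def)
    then have "B * B \<le> 2 * A" using True by (simp add: t_def field_simps)
    then show ?thesis by (simp add: A_def B_def power2_eq_square)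
  next
    case False
    have "B \<ge> 0" unfolding B_def using nonneg by (intro integral_nonneg_AE) auto
    with False A_nonneg show ?thesis by (simp add: A_def B_def)
  qed
qed

lemma integrable_sample_space_prod:
  fixes g :: "nat \<Rightarrow> real \<Rightarrow> real"
  assumes "\<And>j. integrable lborel (g j)"
  shows "integrable (sample_space n p) (\<lambda>X. \<Prod>k<n. \<Prod>j<p. g j (X k j))"
proof -
  interpret lborel: product_sigma_finite "\<lambda>_::nat. lborel :: real measure"
    by (simp add: product_sigma_finite_def sigma_finite_lborel)
  interpret rows: product_sigma_finite "\<lambda>_::nat. PiM {..<p} (\<lambda>_::nat. lborel :: real measure)"
    unfolding product_sigma_finite_def using lborel.sigma_finite by simp
  show ?thesis
    unfolding sample_space_def
    by (intro rows.product_integrable_prod lborel.product_integrable_prod assms) auto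
qed

lemma integral_sample_space_prod:
  fixes g :: "nat \<Rightarrow> real \<Rightarrow> real"
  assumes "\<And>j. integrable lborel (g j)"
  shows "(\<integral>X. (\<Prod>k<n. \<Prod>j<p. g j (X k j)) \<partial>sample_space n p) = (\<Prod>j<p. integral\<^sup>L lborel (g j)) ^ n"
proof -
  interpret lborel: product_sigma_finite "\<lambda>_::nat. lborel :: real measure"
    by (simp add: product_sigma_finite_def sigma_finite_lborel)
  interpret rows: product_sigma_finite "\<lambda>_::nat. PiM {..<p} (\<lambda>_::nat. lborel :: real measure)"
    unfolding product_sigma_finite_def using lborel.sigma_finite by simp
  have "integrable (PiM {..<p} (\<lambda>_. lborel)) (\<lambda>x. \<Prod>j<p. g j (x j))"
    by (intro lborel.product_integrable_prod assms) auto
  then show ?thesis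
    unfolding sample_space_def
    using rows.product_integral_prod[of "{..<n}" "\<lambda>_ x. \<Prod>j<p. g j (x j)"]
      lborel.product_integral_prod[of "{..<p}" g] assms
    by simp
qed

lemma affinity_normal_prec_products_ge:
  assumes d: "\<And>j. d j > 0" and e: "\<And>j. e j > 0"
  shows "affinity (sample_space n p)
      (\<lambda>X. \<Prod>k<n. \<Prod>j<p. normal_prec_density (d j) (X k j))
      (\<lambda>X. \<Prod>k<n. \<Prod>j<p. normal_prec_density (e j) (X k j))
    \<ge> ((\<Prod>j<p. bhattacharyya (d j) (e j)) ^ n)\<^sup>2 / 2"
proof -
  define h where "h j = (\<lambda>x. bhattacharyya (d j) (e j) * normal_prec_density ((d j + e j) / 2) x)" for j
  have de: "(d j + e j) / 2 > 0" for j using d[of j] e[of j] by simp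
  have h_int: "integrable lborel (h j)" for j
    by (simp add: h_def integrable_normal_prec_density[OF de])
  have h_integral: "integral\<^sup>L lborel (h j) = bhattacharyya (d j) (e j)" for j
    by (simp add: h_def integral_normal_prec_density[OF de] integrable_normal_prec_density[OF de])
  have sqrt_eq: "sqrt ((\<Prod>k<n. \<Prod>j<p. normal_prec_density (d j) (X k j)) *
      (\<Prod>k<n. \<Prod>j<p. normal_prec_density (e j) (X k j))) = (\<Prod>k<n. \<Prod>j<p. h j (X k j))" for X
    by (simp add: prod.distrib[symmetric] real_sqrt_prod h_def sqrt_normal_prec_density_mult d e)
  have "affinity (sample_space n p)
      (\<lambda>X. \<Prod>k<n. \<Prod>j<p. normal_prec_density (d j) (X k j))
      (\<lambda>X. \<Prod>k<n. \<Prod>j<p. normal_prec_density (e j) (X k j))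
    \<ge> (\<integral>X. (\<Prod>k<n. \<Prod>j<p. h j (X k j)) \<partial>sample_space n p)\<^sup>2 / 2"
    unfolding sqrt_eq[symmetric]
    using integrable_normal_prec_density normal_prec_density_nonneg d e
      integral_sample_space_prod[of "\<lambda>j. normal_prec_density (d j)" n p]
      integral_sample_space_prod[of "\<lambda>j. normal_prec_density (e j)" n p]
    by (intro affinity_ge_half_sq_integral_sqrt integrable_sample_space_prod)
       (auto simp: integral_normal_prec_density sqrt_eq h_int prod_nonneg
         intro: integrable_sample_space_prod)
  then show ?thesis by (simp add: integral_sample_space_prod h_int h_integral)
qed

lemma two_sqrt_mult_div_add_ge:
  fixes d e :: real
  assumes d: "d > 0" and de: "d \<le> e"
  shows "2 * sqrt (d * e) / (d + e) \<ge> 1 - ((e - d) / d)\<^sup>2 / 8"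
proof -
  define u v where "u = sqrt d" and "v = sqrt e"
  have u: "u > 0" and uv: "u \<le> v" using d de by (simp_all add: u_def v_def)
  have du: "d = u\<^sup>2" and ev: "e = v\<^sup>2" using d de by (simp_all add: u_def v_def)
  have "sqrt (d * e) = u * v" by (simp add: u_def v_def real_sqrt_mult)
  then have "1 - 2 * sqrt (d * e) / (d + e) = (v - u)\<^sup>2 / (u\<^sup>2 + v\<^sup>2)"
    using u by (simp add: du ev field_simps power2_eq_square)
  also have "\<dots> \<le> (v - u)\<^sup>2 / (2 * u\<^sup>2)"
    using u uv by (intro divide_left_mono) (auto simp: power_mono add_pos_nonneg)
  also have "\<dots> \<le> (v - u)\<^sup>2 * (v + u)\<^sup>2 / (8 * u\<^sup>2 * u\<^sup>2)"
  proof -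
    have "(2 * u)\<^sup>2 \<le> (v + u)\<^sup>2" using u uv by (intro power_mono) auto
    then have le: "(v - u)\<^sup>2 * (4 * u\<^sup>2) \<le> (v - u)\<^sup>2 * (v + u)\<^sup>2"
      by (intro mult_left_mono) (auto simp: power_mult_distrib)
    have "(v - u)\<^sup>2 / (2 * u\<^sup>2) = (v - u)\<^sup>2 * (4 * u\<^sup>2) / (8 * u\<^sup>2 * u\<^sup>2)"
      using u by (simp add: field_simps power2_eq_square)
    then show ?thesis using le by (simp only:) (rule divide_right_mono, simp_all)
  qed
  also have "\<dots> = ((e - d) / d)\<^sup>2 / 8"
    by (simp add: du ev power_divide power2_eq_square algebra_simps)
  finally show ?thesis by simp
qed

lemma exp_le_one_minus_pow:
  fixes x :: real
  assumes "0 \<le> x" "x \<le> 1 / 2"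
  shows "exp (- (2 * x * real n)) \<le> (1 - x) ^ n"
proof -
  have "1 \<le> (1 - x) * (1 + 2 * x)"
    using assms mult_left_mono[of "2 * x" 1 x] by (simp add: algebra_simps)
  also have "\<dots> \<le> (1 - x) * exp (2 * x)"
    using assms exp_ge_add_one_self[of "2 * x"] by (intro mult_left_mono) auto
  finally have "exp (- 2 * x) \<le> 1 - x"
    by (simp add: exp_minus field_simps)
  then have "exp (- 2 * x) ^ n \<le> (1 - x) ^ n" by (intro power_mono) auto
  then show ?thesis by (simp add: exp_of_nat_mult[symmetric] ac_simps)
qed

lemma bhattacharyya_pow_ge:
  assumes c: "c > 0" and a: "0 \<le> a" "a \<le> c"
  shows "bhattacharyya c (c + a) ^ (2 * n) \<ge> exp (- ((a / c)\<^sup>2 * real n / 4))"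
proof -
  define x where "x = (a / c)\<^sup>2 / 8"
  have x: "0 \<le> x" "x \<le> 1 / 2"
    using a c power_le_one[of "a / c" 2] by (auto simp: x_def)
  have "1 - x \<le> 2 * sqrt (c * (c + a)) / (c + (c + a))"
    using two_sqrt_mult_div_add_ge[of c "c + a"] c a by (simp add: x_def)
  also have "\<dots> = bhattacharyya c (c + a) ^ 2"
    using c a by (simp add: bhattacharyya_def)
  finally have "(1 - x) ^ n \<le> bhattacharyya c (c + a) ^ (2 * n)"
    using x by (subst power_mult) (intro power_mono, auto)
  moreover have "(a / c)\<^sup>2 * real n / 4 = 2 * x * real n" by (simp add: x_def)
  ultimately show ?thesis using exp_le_one_minus_pow[OF x, of n] by (simp only:)
qed

lemma prod_bhattacharyya_single_diff:
  fixes d e :: "nat \<Rightarrow> real" and m p :: nat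
  assumes "m < p" "\<And>j. d j > 0" "\<And>j. j < p \<Longrightarrow> j \<noteq> m \<Longrightarrow> d j = e j"
  shows "(\<Prod>j<p. bhattacharyya (d j) (e j)) = bhattacharyya (d m) (e m)"
proof -
  have "(\<Prod>j\<in>{..<p} - {m}. bhattacharyya (d j) (e j)) = 1"
    using assms(2) assms(3)[symmetric] by (intro prod.neutral) (auto simp: bhattacharyya_same)
  then show ?thesis using assms(1) by (simp add: prod.remove[of "{..<p}" m])
qed

lemma sq_add_mult_add_sq_ge:
  fixes A u \<delta> M :: real
  assumes M: "M > 0" and u: "0 \<le> u" "u \<le> 2 / M"
  shows "(A + u * \<delta>)\<^sup>2 + (\<delta> / M)\<^sup>2 \<ge> A\<^sup>2 / 5"
proof -
  define v where "v = 1 / M\<^sup>2"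
  have v: "v > 0" using M by (simp add: v_def)
  have u2: "u\<^sup>2 \<le> 4 * v"
    using power_mono[OF u(2) u(1), of 2] by (simp add: v_def power_divide)
  let ?L = "(A + u * \<delta>)\<^sup>2 + v * \<delta>\<^sup>2"
  \<comment> \<open>minimising over \<open>\<delta>\<close> gives \<open>?L \<ge> A\<^sup>2 v / (u\<^sup>2 + v)\<close>\<close>
  have "A\<^sup>2 * v \<le> A\<^sup>2 * v + (u * A + (u\<^sup>2 + v) * \<delta>)\<^sup>2" by simp
  also have "\<dots> = (u\<^sup>2 + v) * ?L"
    by (simp add: power2_eq_square algebra_simps)
  also have "\<dots> \<le> (5 * v) * ?L" using u2 v by (intro mult_right_mono) auto
  finally have "A\<^sup>2 \<le> 5 * ?L" using v by (simp add: ac_simps)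
  then show ?thesis by (simp add: v_def power_divide algebra_simps)
qed

lemma normalized_diff_sq_ge:
  fixes d d' D D' M P a :: real
  assumes M: "M > 0" and P: "P > 0" and D': "0 < D'" "D' \<le> 2 * P / M"
    and d: "0 \<le> d" "d \<le> 2 / M" and a: "\<bar>d' - d\<bar> = a"
  shows "(d' / D' - d / D)\<^sup>2 + ((1 / D' - 1 / D) / M)\<^sup>2 \<ge> a\<^sup>2 * M\<^sup>2 / (20 * P\<^sup>2)"
proof -
  have "d' / D' - d / D = (d' - d) / D' + d * (1 / D' - 1 / D)"
    using D' by (simp add: field_simps)
  then have "(d' / D' - d / D)\<^sup>2 + ((1 / D' - 1 / D) / M)\<^sup>2 \<ge> ((d' - d) / D')\<^sup>2 / 5"
    using sq_add_mult_add_sq_ge[OF M d] by simp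
  moreover have "((d' - d) / D')\<^sup>2 = a\<^sup>2 / D'\<^sup>2"
    using a by (metis power2_abs power_divide)
  moreover have "a\<^sup>2 / D'\<^sup>2 \<ge> a\<^sup>2 / (2 * P / M)\<^sup>2"
    using D' M P by (intro divide_left_mono power_mono) auto
  moreover have "a\<^sup>2 / (2 * P / M)\<^sup>2 = a\<^sup>2 * M\<^sup>2 / (4 * P\<^sup>2)"
    by (simp add: power_divide power_mult_distrib)
  ultimately show ?thesis by simp
qed

lemma sum_sq_normalized_diff_ge:
  fixes d d' :: "nat \<Rightarrow> real" and p q :: nat and K :: "nat set" and M a :: real
  assumes M: "M > 0" and pq: "2 * q \<le> p" and p: "p > 0" and K: "K \<subseteq> {..<q}"
    and d: "\<And>i. i < p \<Longrightarrow> 1 / M \<le> d i \<and> d i \<le> 2 / M"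
    and d': "\<And>i. i < p \<Longrightarrow> 1 / M \<le> d' i \<and> d' i \<le> 2 / M"
    and tail: "\<And>i. q \<le> i \<Longrightarrow> i < p \<Longrightarrow> d i = 1 / M \<and> d' i = 1 / M"
    and Kd: "\<And>i. i \<in> K \<Longrightarrow> \<bar>d' i - d i\<bar> = a"
  shows "(\<Sum>i<p. (d' i / (\<Sum>j<p. d' j) - d i / (\<Sum>j<p. d j))\<^sup>2)
    \<ge> real (card K) * (a\<^sup>2 * M\<^sup>2 / (20 * (real p)\<^sup>2))"
proof -
  define D D' where "D = (\<Sum>j<p. d j)" and "D' = (\<Sum>j<p. d' j)"
  define x where "x i = d' i / D' - d i / D" for i
  define \<delta> where "\<delta> = (1 / D' - 1 / D) / M"
  \<comment> \<open>each index of \<open>K\<close> is paired with an untouched index \<open>\<ge> q\<close>, where \<open>x = \<delta>\<close>\<close>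
  have "real p / M \<le> D'" "D' \<le> 2 * real p / M"
    using sum_mono[of "{..<p}" "\<lambda>_. 1 / M" d'] sum_mono[of "{..<p}" d' "\<lambda>_. 2 / M"] d'
    by (auto simp: D'_def mult.commute)
  then have D': "0 < D'" "D' \<le> 2 * real p / M"
    using M p by (auto intro: less_le_trans[rotated])
  have tail_x: "x i = \<delta>" if "q \<le> i" "i < p" for i
    using that tail[OF that] by (simp add: x_def \<delta>_def diff_divide_distrib ac_simps)
  have "card K \<le> p - q" using card_mono[OF _ K] pq by simp
  then have "(\<Sum>i\<in>K. \<delta>\<^sup>2) \<le> (\<Sum>i\<in>{q..<p}. (x i)\<^sup>2)" by (simp add: tail_x mult_right_mono)
  moreover have "(\<Sum>i\<in>K. (x i)\<^sup>2) + (\<Sum>i\<in>{q..<p}. (x i)\<^sup>2) \<le> (\<Sum>i<p. (x i)\<^sup>2)"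
    using K pq finite_subset[OF K]
    by (subst sum.union_disjoint[symmetric]) (auto intro!: sum_mono2)
  moreover have "a\<^sup>2 * M\<^sup>2 / (20 * (real p)\<^sup>2) \<le> (x i)\<^sup>2 + \<delta>\<^sup>2" if "i \<in> K" for i
  proof -
    have "0 \<le> d i" "d i \<le> 2 / M"
      using d[of i] that K pq M by (auto intro: order_trans[of 0 "1 / M"])
    then show ?thesis
      unfolding x_def \<delta>_def using normalized_diff_sq_ge[OF M _ D' _ _ Kd[OF that]] p by simp
  qed
  then have "real (card K) * (a\<^sup>2 * M\<^sup>2 / (20 * (real p)\<^sup>2)) \<le> (\<Sum>i\<in>K. (x i)\<^sup>2 + \<delta>\<^sup>2)"
    using sum_mono[of K "\<lambda>_. a\<^sup>2 * M\<^sup>2 / (20 * (real p)\<^sup>2)"] by simp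
  ultimately show ?thesis unfolding x_def D_def D'_def by (simp add: sum.distrib)
qed

lemma Theta_cases: "\<theta> \<in> Theta q \<Longrightarrow> \<theta> i = 0 \<or> \<theta> i = 1"
  unfolding Theta_def by (cases "i < q") auto

lemma Theta_nonneg: "\<theta> \<in> Theta q \<Longrightarrow> \<theta> i \<ge> 0"
  using Theta_cases[of \<theta> q i] by auto

lemma finite_Theta: "finite (Theta q)"
proof (rule finite_subset)
  show "Theta q \<subseteq> (\<lambda>S m. if m \<in> S then 1 else 0) ` Pow {..<q}"
  proof
    fix \<theta> assume \<theta>: "\<theta> \<in> Theta q"
    then have "\<theta> = (\<lambda>m. if m \<in> {m. m < q \<and> \<theta> m = 1} then 1 else 0)"
      using Theta_cases[OF \<theta>] unfolding Theta_def by force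
    then show "\<theta> \<in> (\<lambda>S m. if m \<in> S then 1 else 0) ` Pow {..<q}" by blast
  qed
qed simp

lemma hamming_eq_card:
  assumes "\<theta> \<in> Theta q" "\<theta>' \<in> Theta q"
  shows "hamming q \<theta> \<theta>' = real (card {m\<in>{..<q}. \<theta> m \<noteq> \<theta>' m})"
proof -
  have "hamming q \<theta> \<theta>' = (\<Sum>m<q. if \<theta> m \<noteq> \<theta>' m then 1 else 0)"
    unfolding hamming_def
  proof (intro sum.cong refl)
    fix m
    show "\<bar>\<theta> m - \<theta>' m\<bar> = (if \<theta> m \<noteq> \<theta>' m then 1 else 0)"
      using Theta_cases[OF assms(1), of m] Theta_cases[OF assms(2), of m] by auto
  qed
  then show ?thesis by (simp add: sum.If_cases Int_def)
qed

lemma Min_pairs_ge: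
  assumes "finite T" "u \<in> T" "v \<in> T" "R u v"
    and "\<And>t t'. t \<in> T \<Longrightarrow> t' \<in> T \<Longrightarrow> R t t' \<Longrightarrow> c \<le> f t t'"
  shows "c \<le> Min {f t t' | t t'. t \<in> T \<and> t' \<in> T \<and> R t t'}"
proof -
  have "{f t t' | t t'. t \<in> T \<and> t' \<in> T \<and> R t t'} \<subseteq> (\<lambda>(t, t'). f t t') ` (T \<times> T)"
    by auto
  then have "finite {f t t' | t t'. t \<in> T \<and> t' \<in> T \<and> R t t'}"
    by (rule finite_subset) (use assms(1) in auto)
  then show ?thesis using assms(2-) by (subst Min_ge_iff) auto
qed

definition precision ::
    "real \<Rightarrow> real \<Rightarrow> nat \<Rightarrow> nat \<Rightarrow> (nat \<Rightarrow> real) \<Rightarrow> nat \<Rightarrow> real" where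
  "precision M \<tau> n p \<theta> i = 1 / M + (if i < p div 2 then \<theta> i * (\<tau> / sqrt (real n)) else 0)"

lemma Sigma_inv_eq_mat_diag: "Sigma_inv M \<tau> n p \<theta> = mat_diag p (precision M \<tau> n p \<theta>)"
proof (rule eq_matI)
  fix i j assume "i < dim_row (mat_diag p (precision M \<tau> n p \<theta>))"
    "j < dim_col (mat_diag p (precision M \<tau> n p \<theta>))"
  then have ij: "i < p" "j < p" by (auto simp: mat_diag_def)
  have "(\<Sum>m<p div 2. \<theta> m * (\<tau> / sqrt (real n)) * (unit_vec p m $ i) * (unit_vec p m $ j))
      = (\<Sum>m<p div 2. if m = i then (if i = j then \<theta> i * (\<tau> / sqrt (real n)) else 0) else 0)"
    using ij by (intro sum.cong) auto
  then show "Sigma_inv M \<tau> n p \<theta> $$ (i, j) = mat_diag p (precision M \<tau> n p \<theta>) $$ (i, j)"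
    using ij by (auto simp: Sigma_inv_def precision_def mat_diag_def)
qed (auto simp: Sigma_inv_def mat_diag_def)

lemma precision_pos:
  assumes "M > 0" "\<tau> \<ge> 0" "\<And>i. \<theta> i \<ge> 0"
  shows "precision M \<tau> n p \<theta> i > 0"
  using assms unfolding precision_def by (auto intro!: add_pos_nonneg)

context
  fixes M \<tau> :: real and n p :: nat and \<theta> :: "nat \<Rightarrow> real"
  assumes M: "M > 0" and \<tau>: "\<tau> \<ge> 0" and \<theta>: "\<And>i. \<theta> i \<ge> 0"
begin

private lemma precision_nonzero: "precision M \<tau> n p \<theta> i \<noteq> 0"
  using precision_pos[OF M \<tau> \<theta>] by (simp add: less_le)

lemma Sigma_eq_mat_diag:
  "Sigma M \<tau> n p \<theta> = mat_diag p (\<lambda>i. 1 / precision M \<tau> n p \<theta> i)"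
  unfolding Sigma_def Sigma_inv_eq_mat_diag by (simp add: minv_mat_diag precision_nonzero)

lemma minv_Sigma: "minv (Sigma M \<tau> n p \<theta>) = mat_diag p (precision M \<tau> n p \<theta>)"
  unfolding Sigma_eq_mat_diag by (simp add: minv_mat_diag precision_nonzero)

lemma w_GMV_Sigma:
  "w_GMV (Sigma M \<tau> n p \<theta>) =
    vec p (\<lambda>i. precision M \<tau> n p \<theta> i / (\<Sum>j<p. precision M \<tau> n p \<theta> j))"
proof -
  have dim: "dim_row (Sigma M \<tau> n p \<theta>) = p" by (simp add: Sigma_eq_mat_diag mat_diag_def)
  have "vec p (\<lambda>_. 1) \<bullet> vec p (precision M \<tau> n p \<theta>) = (\<Sum>j<p. precision M \<tau> n p \<theta> j)"
    by (simp add: scalar_prod_def atLeast0LessThan)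
  then show ?thesis
    unfolding w_GMV_def Let_def minv_Sigma dim mat_diag_mult_vec by (auto intro!: eq_vecI)
qed

lemma mvn_density_Sigma:
  "mvn_density (Sigma M \<tau> n p \<theta>) x =
    (\<Prod>i<p. normal_prec_density (precision M \<tau> n p \<theta> i) (x i))"
proof -
  have dim: "dim_row (Sigma M \<tau> n p \<theta>) = p" by (simp add: Sigma_eq_mat_diag mat_diag_def)
  have det: "det (Sigma M \<tau> n p \<theta>) = (\<Prod>i<p. 1 / precision M \<tau> n p \<theta> i)"
    by (simp add: Sigma_eq_mat_diag det_mat_diag)
  have "(2 * pi) powr (- real p / 2) = (2 * pi) powr (\<Sum>i<p. - 1 / 2)" by simp
  also have "\<dots> = (\<Prod>i<p. (2 * pi) powr (- 1 / 2))" by (rule powr_sum) simp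
  finally have "mvn_density (Sigma M \<tau> n p \<theta>) x = (\<Prod>i<p. (2 * pi) powr (- 1 / 2)) *
      (\<Prod>i<p. (1 / precision M \<tau> n p \<theta> i) powr (- 1 / 2)) *
      (\<Prod>i<p. exp (- (1 / 2) * (precision M \<tau> n p \<theta> i * (x i)\<^sup>2)))"
    unfolding mvn_density_def Let_def dim det minv_Sigma sum_mat_diag_quadratic_form
    by (simp add: prod_powr_distrib sum_distrib_left exp_sum)
  also have "\<dots> = (\<Prod>i<p. normal_prec_density (precision M \<tau> n p \<theta> i) (x i))"
    unfolding prod.distrib[symmetric]
    by (intro prod.cong refl normal_prec_density_powr precision_pos[OF M \<tau> \<theta>])
  finally show ?thesis .
qed

lemma joint_density_Sigma:
  "joint_density N (Sigma M \<tau> n p \<theta>) =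
    (\<lambda>X. \<Prod>k<N. \<Prod>i<p. normal_prec_density (precision M \<tau> n p \<theta> i) (X k i))"
  by (simp add: joint_density_def mvn_density_Sigma fun_eq_iff)

end

lemma precision_bounds:
  assumes M: "M > 0" and \<tau>: "\<tau> \<ge> 0" and small: "\<tau> / sqrt (real n) \<le> 1 / M"
    and \<theta>: "\<theta> \<in> Theta (p div 2)"
  shows "1 / M \<le> precision M \<tau> n p \<theta> i \<and> precision M \<tau> n p \<theta> i \<le> 2 / M"
proof -
  have "0 \<le> \<theta> i * (\<tau> / sqrt (real n))" "\<theta> i * (\<tau> / sqrt (real n)) \<le> 1 / M"
    using Theta_cases[OF \<theta>, of i] \<tau> small M by auto
  then show ?thesis by (simp add: precision_def)
qed

lemma abs_precision_diff:
  assumes "\<theta> \<in> Theta (p div 2)" "\<theta>' \<in> Theta (p div 2)" "m < p div 2" "\<theta> m \<noteq> \<theta>' m"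
    and "\<tau> \<ge> 0"
  shows "\<bar>precision M \<tau> n p \<theta>' m - precision M \<tau> n p \<theta> m\<bar> = \<tau> / sqrt (real n)"
  using assms Theta_cases[OF assms(1), of m] Theta_cases[OF assms(2), of m]
  by (auto simp: precision_def)

lemma w_GMV_Sigma_dist_ge:
  assumes M: "M > 0" and \<tau>: "\<tau> > 0" and n: "n > 0" and p: "p > 0"
    and small: "\<tau> / sqrt (real n) \<le> 1 / M"
    and \<theta>: "\<theta> \<in> Theta (p div 2)" and \<theta>': "\<theta>' \<in> Theta (p div 2)"
    and H: "hamming (p div 2) \<theta> \<theta>' \<ge> 1"
  shows "(enorm (w_GMV (Sigma M \<tau> n p \<theta>') - w_GMV (Sigma M \<tau> n p \<theta>)))\<^sup>2 / hamming (p div 2) \<theta> \<theta>'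
    \<ge> \<tau>\<^sup>2 * M\<^sup>2 / (20 * real n * (real p)\<^sup>2)"
proof -
  define K where "K = {m\<in>{..<p div 2}. \<theta> m \<noteq> \<theta>' m}"
  have HK: "hamming (p div 2) \<theta> \<theta>' = real (card K)"
    unfolding K_def by (rule hamming_eq_card[OF \<theta> \<theta>'])
  have "real (card K) * ((\<tau> / sqrt (real n))\<^sup>2 * M\<^sup>2 / (20 * (real p)\<^sup>2))
      \<le> (enorm (w_GMV (Sigma M \<tau> n p \<theta>') - w_GMV (Sigma M \<tau> n p \<theta>)))\<^sup>2"
    unfolding w_GMV_Sigma[OF M less_imp_le[OF \<tau>] Theta_nonneg[OF \<theta>]]
      w_GMV_Sigma[OF M less_imp_le[OF \<tau>] Theta_nonneg[OF \<theta>']] enorm_vec_diff_sq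
    using precision_bounds[OF M less_imp_le[OF \<tau>] small] \<theta> \<theta>'
      abs_precision_diff[OF \<theta> \<theta>' _ _ less_imp_le[OF \<tau>]]
    by (intro sum_sq_normalized_diff_ge[OF M _ p, where q = "p div 2"])
       (auto simp: K_def precision_def)
  moreover have "card K > 0" using H HK by simp
  ultimately show ?thesis
    using n by (simp add: HK pos_le_divide_eq power_divide field_simps)
qed

lemma affinity_Sigma_ge:
  assumes M: "M > 0" and \<tau>: "\<tau> > 0" and n: "n > 0"
    and small: "\<tau> / sqrt (real n) \<le> 1 / M"
    and \<theta>: "\<theta> \<in> Theta (p div 2)" and \<theta>': "\<theta>' \<in> Theta (p div 2)"
    and H: "hamming (p div 2) \<theta> \<theta>' = 1"
  shows "affinity (sample_space n p) (joint_density n (Sigma M \<tau> n p \<theta>))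
      (joint_density n (Sigma M \<tau> n p \<theta>')) \<ge> exp (- (\<tau>\<^sup>2 * M\<^sup>2 / 4)) / 2"
proof -
  let ?a = "\<tau> / sqrt (real n)"
  let ?d = "precision M \<tau> n p \<theta>" and ?e = "precision M \<tau> n p \<theta>'"
  have "card {m\<in>{..<p div 2}. \<theta> m \<noteq> \<theta>' m} = 1"
    using H hamming_eq_card[OF \<theta> \<theta>'] by simp
  then obtain m where "{m\<in>{..<p div 2}. \<theta> m \<noteq> \<theta>' m} = {m}"
    by (rule card_1_singletonE)
  then have "m < p div 2" "\<theta> m \<noteq> \<theta>' m" "\<And>j. j < p div 2 \<Longrightarrow> j \<noteq> m \<Longrightarrow> \<theta> j = \<theta>' j"
    by auto
  then have "m < p" "\<And>j. j \<noteq> m \<Longrightarrow> ?d j = ?e j"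
    and "{?d m, ?e m} = {1 / M, 1 / M + ?a}"
    using Theta_cases[OF \<theta>, of m] Theta_cases[OF \<theta>', of m] by (auto simp: precision_def)
  then have "(\<Prod>j<p. bhattacharyya (?d j) (?e j)) = bhattacharyya (1 / M) (1 / M + ?a)"
    using precision_pos[OF M less_imp_le[OF \<tau>] Theta_nonneg[OF \<theta>]]
    by (subst prod_bhattacharyya_single_diff[where m = m])
       (auto simp: doubleton_eq_iff bhattacharyya_commute)
  moreover have "exp (- (\<tau>\<^sup>2 * M\<^sup>2 / 4)) \<le> bhattacharyya (1 / M) (1 / M + ?a) ^ (2 * n)"
    using bhattacharyya_pow_ge[of "1 / M" ?a n] M \<tau> small n
    by (simp add: power_divide power_mult_distrib)
  moreover have "((\<Prod>j<p. bhattacharyya (?d j) (?e j)) ^ n)\<^sup>2 / 2 \<le> affinity (sample_space n p)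
      (joint_density n (Sigma M \<tau> n p \<theta>)) (joint_density n (Sigma M \<tau> n p \<theta>'))"
    using affinity_normal_prec_products_ge[where d = ?d and e = ?e and n = n and p = p]
      precision_pos[OF M less_imp_le[OF \<tau>] Theta_nonneg[OF \<theta>]]
      precision_pos[OF M less_imp_le[OF \<tau>] Theta_nonneg[OF \<theta>']]
    by (simp add: joint_density_Sigma[OF M less_imp_le[OF \<tau>] Theta_nonneg[OF \<theta>]]
        joint_density_Sigma[OF M less_imp_le[OF \<tau>] Theta_nonneg[OF \<theta>']])
  ultimately show ?thesis by (simp add: power_mult[symmetric] mult.commute)
qed

lemma lhs_quantity_ge:
  assumes M: "M > 0" and \<tau>: "\<tau> > 0" and n: "n > 0" and p: "p \<ge> 2"
    and small: "\<tau> / sqrt (real n) \<le> 1 / M"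
  shows "lhs_quantity M \<tau> n p \<ge> (\<tau>\<^sup>2 * M\<^sup>2 * exp (- (\<tau>\<^sup>2 * M\<^sup>2 / 4)) / 320) / (real n * real p)"
proof -
  define T where "T = \<tau>\<^sup>2 * M\<^sup>2 * exp (- (\<tau>\<^sup>2 * M\<^sup>2 / 4))"
  define c1 where "c1 = \<tau>\<^sup>2 * M\<^sup>2 / (20 * real n * (real p)\<^sup>2)"
  define c2 where "c2 = exp (- (\<tau>\<^sup>2 * M\<^sup>2 / 4)) / 2"
  define t0 t1 :: "nat \<Rightarrow> real" where "t0 = (\<lambda>_. 0)" and "t1 = (\<lambda>m. if m = 0 then 1 else 0)"
  have "hamming (p div 2) t0 t1 = (\<Sum>m<p div 2. if m = 0 then 1 else 0)"
    unfolding hamming_def t0_def t1_def by (intro sum.cong) auto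
  then have t01: "t0 \<in> Theta (p div 2)" "t1 \<in> Theta (p div 2)" "hamming (p div 2) t0 t1 = 1"
    using p by (auto simp: t0_def t1_def Theta_def)
  have min1: "c1 \<le> Min {(enorm (w_GMV (Sigma M \<tau> n p \<theta>') - w_GMV (Sigma M \<tau> n p \<theta>)))\<^sup>2
      / hamming (p div 2) \<theta> \<theta>' | \<theta> \<theta>'. \<theta> \<in> Theta (p div 2) \<and> \<theta>' \<in> Theta (p div 2)
      \<and> hamming (p div 2) \<theta> \<theta>' \<ge> 1}"
    unfolding c1_def using t01 p
    by (intro Min_pairs_ge[where u = t0 and v = t1] finite_Theta
        w_GMV_Sigma_dist_ge[OF M \<tau> n _ small]) auto
  have min2: "c2 \<le> Min {affinity (sample_space n p) (joint_density n (Sigma M \<tau> n p \<theta>))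
      (joint_density n (Sigma M \<tau> n p \<theta>')) | \<theta> \<theta>'. \<theta> \<in> Theta (p div 2) \<and> \<theta>' \<in> Theta (p div 2)
      \<and> hamming (p div 2) \<theta> \<theta>' = 1}"
    unfolding c2_def using t01
    by (intro Min_pairs_ge[where u = t0 and v = t1] finite_Theta
        affinity_Sigma_ge[OF M \<tau> n small]) auto
  have "0 \<le> c1" "0 \<le> c2" by (simp_all add: c1_def c2_def)
  with min1 min2 have "c1 * (real (p div 2) / 2) * c2 \<le> lhs_quantity M \<tau> n p"
    unfolding lhs_quantity_def Let_def by (intro mult_mono) (auto intro: order_trans)
  moreover have "c1 * (real (p div 2) / 2) * c2
      = T / 320 / (real n * real p) * (4 * real (p div 2) / real p)"
    using n p by (simp add: c1_def c2_def T_def field_simps power2_eq_square)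
  moreover have "1 \<le> 4 * real (p div 2) / real p" using p by (simp add: le_divide_eq)
  moreover have "T / 320 / (real n * real p) \<ge> 0" by (simp add: T_def)
  ultimately show ?thesis
    unfolding T_def[symmetric] by (metis mult.right_neutral mult_left_mono order_trans)
qed

theorem lemma1:
  fixes M \<tau> :: real and p :: "nat \<Rightarrow> nat"
  assumes "M > 0" and "\<tau> > 0"
    and "filterlim p at_top sequentially"
    and "\<forall>n\<ge>1. \<tau> / sqrt (real n) \<le> M / 3"
    and "\<tau> / M \<le> 1 / 3"
  shows "\<exists>C>0. \<forall>\<^sub>F n in sequentially. lhs_quantity M \<tau> n (p n) \<ge> C / (real n * real (p n))"
proof (intro exI conjI)
  show "\<tau>\<^sup>2 * M\<^sup>2 * exp (- (\<tau>\<^sup>2 * M\<^sup>2 / 4)) / 320 > 0" using assms(1,2) by simp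
  have "((\<lambda>n. \<tau> / sqrt (real n)) \<longlongrightarrow> 0) sequentially" by real_asymp
  then have "\<forall>\<^sub>F n in sequentially. \<tau> / sqrt (real n) < 1 / M"
    using assms(1) by (intro order_tendstoD) auto
  moreover have "\<forall>\<^sub>F n in sequentially. 2 \<le> p n"
    using assms(3) by (simp add: filterlim_at_top)
  moreover have "\<forall>\<^sub>F n in sequentially. n > 0" by (rule eventually_gt_at_top)
  ultimately show "\<forall>\<^sub>F n in sequentially. lhs_quantity M \<tau> n (p n)
      \<ge> (\<tau>\<^sup>2 * M\<^sup>2 * exp (- (\<tau>\<^sup>2 * M\<^sup>2 / 4)) / 320) / (real n * real (p n))"
    by eventually_elim (rule lhs_quantity_ge[OF assms(1,2)], auto)
qed

end
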